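(* Let $\lambda_1,\lambda_2$ be as in the context and, for each $c>0$, let $\widetilde{\theta_c}$ be the unique $\theta\in(0,\frac{\pi}{2})\cap(0,\theta_c^+)$ with $H(c,\theta)=0$. Then $\lim_{c\to+\infty}\widetilde{\theta_c}=\frac{\pi}{2}$.
   Context: Either $\lambda_1>\lambda_2>0$ or $\lambda_1=\lambda_2=1$. For $c>0$ put $\theta_c^+=\pi$ if $c>\sqrt2\lambda_1$ and $\theta_c^+=\arccos(1-c^2/\lambda_1^2)$ if $0<c\le\sqrt2\lambda_1$; $\Omega=\{(c,\theta): c>0,\ |\theta|<\theta_c^+\}$. For $(c,\theta)\in\Omega$: $D=\sin\theta/c$; $\varphi$ is the global solution of $\varphi'(u)=\sqrt{c^2+2\cos\theta\,B(u)-D^2B(u)^2}$, $\varphi(0)=0$, where $B(u)=\lambda_1^2\cos^2\varphi(u)+\lambda_2^2\sin^2\varphi(u)$; $U>0$ is the unique number with $\varphi(U)=\pi$; $f$ solves $f'(u)=DB(u)$, $f(0)=0$; $G(u)=\int_0^u\frac{c-\varphi'(s)}{B(s)}ds$; $H(c,\theta)=Df(U)+cG(U)$. For every $c>0$ there is exactly one $\theta\in(0,\pi/2)\cap(0,\theta_c^+)$ with $H(c,\theta)=0$. *)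

theory Defs
  imports "HOL-Analysis.Analysis"
begin

definition theta_plus :: "real \<Rightarrow> real \<Rightarrow> real" where
  "theta_plus l1 c = (if c > sqrt 2 * l1 then pi else arccos (1 - c\<^sup>2 / l1\<^sup>2))"

definition Bfun :: "real \<Rightarrow> real \<Rightarrow> real \<Rightarrow> real" where
  "Bfun l1 l2 x = l1\<^sup>2 * (cos x)\<^sup>2 + l2\<^sup>2 * (sin x)\<^sup>2"

definition Dfun :: "real \<Rightarrow> real \<Rightarrow> real" where
  "Dfun c \<theta> = sin \<theta> / c"

definition rhs :: "real \<Rightarrow> real \<Rightarrow> real \<Rightarrow> real \<Rightarrow> real \<Rightarrow> real" where
  "rhs l1 l2 c \<theta> x = sqrt (c\<^sup>2 + 2 * cos \<theta> * Bfun l1 l2 x - (Dfun c \<theta>)\<^sup>2 * (Bfun l1 l2 x)\<^sup>2)"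

definition phi :: "real \<Rightarrow> real \<Rightarrow> real \<Rightarrow> real \<Rightarrow> real \<Rightarrow> real" where
  "phi l1 l2 c \<theta> = (THE \<phi>. \<phi> 0 = 0 \<and>
      (\<forall>u. (\<phi> has_real_derivative rhs l1 l2 c \<theta> (\<phi> u)) (at u)))"

definition Ufun :: "real \<Rightarrow> real \<Rightarrow> real \<Rightarrow> real \<Rightarrow> real" where
  "Ufun l1 l2 c \<theta> = (THE U. U > 0 \<and> phi l1 l2 c \<theta> U = pi)"

definition ffun :: "real \<Rightarrow> real \<Rightarrow> real \<Rightarrow> real \<Rightarrow> real \<Rightarrow> real" where
  "ffun l1 l2 c \<theta> u = integral {0..u} (\<lambda>s. Dfun c \<theta> * Bfun l1 l2 (phi l1 l2 c \<theta> s))"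

definition Gfun :: "real \<Rightarrow> real \<Rightarrow> real \<Rightarrow> real \<Rightarrow> real \<Rightarrow> real" where
  "Gfun l1 l2 c \<theta> u = integral {0..u} (\<lambda>s.
      (c - rhs l1 l2 c \<theta> (phi l1 l2 c \<theta> s)) / Bfun l1 l2 (phi l1 l2 c \<theta> s))"

definition Hfun :: "real \<Rightarrow> real \<Rightarrow> real \<Rightarrow> real \<Rightarrow> real" where
  "Hfun l1 l2 c \<theta> = Dfun c \<theta> * ffun l1 l2 c \<theta> (Ufun l1 l2 c \<theta>)
      + c * Gfun l1 l2 c \<theta> (Ufun l1 l2 c \<theta>)"

end

theory Submission
  imports Defs "HOL-Real_Asymp.Real_Asymp"
begin

(* Suppose cos \<theta> \<ge> \<kappa> > 0 and c\<^sup>2 \<kappa> > 3 \<lambda>\<^sub>1\<^sup>2. Then D\<^sup>2 B \<le> \<lambda>\<^sub>1\<^sup>2 / c\<^sup>2 < \<kappa>/3, so the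
   radicand defining \<phi>' lies between c\<^sup>2 and 4 c\<^sup>2, i.e. c \<le> \<phi>' \<le> 2c, and
   (c - \<phi>') / B = (D\<^sup>2 B - 2 cos \<theta>) / (c + \<phi>') \<le> -\<kappa> / (2c).
   Integrating over [0, U] gives D f(U) \<le> U \<kappa>/3 and c G(U) \<le> -U \<kappa>/2, hence H(c, \<theta>) < 0.
   So for large c the zero of H must have cos \<theta> < \<kappa>: cos \<theta>_c tends to 0, and therefore
   \<theta>_c = arccos (cos \<theta>_c) tends to \<pi>/2. *)

lemma DERIV_pos_imp_strict_mono:
  fixes f f' :: "real \<Rightarrow> real"
  assumes "\<And>x. (f has_real_derivative f' x) (at x)" and "\<And>x. 0 < f' x"
  shows "strict_mono f"
  by (rule strict_monoI, rule DERIV_pos_imp_increasing) (use assms in auto)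

lemma DERIV_ge_pos_imp_surj:
  fixes f f' :: "real \<Rightarrow> real"
  assumes f: "\<And>x. (f has_real_derivative f' x) (at x)" and m: "0 < m" "\<And>x. m \<le> f' x"
  shows "surj f"
proof -
  have grow: "f a + m * (b - a) \<le> f b" if "a \<le> b" for a b
  proof -
    have "f a - m * a \<le> f b - m * b"
    proof (rule DERIV_nonneg_imp_nondecreasing[OF that])
      show "\<exists>y. ((\<lambda>x. f x - m * x) has_real_derivative y) (at x) \<and> 0 \<le> y" for x
        using m by (intro exI[of _ "f' x - m"]) (auto intro!: derivative_eq_intros f)
    qed
    then show ?thesis by (simp add: algebra_simps)
  qed
  have "\<exists>x. f x = y" for y
  proof -
    define r where "r = \<bar>y - f 0\<bar> / m"
    have "f (-r) \<le> y" "y \<le> f r" "-r \<le> r"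
      using grow[of "-r" 0] grow[of 0 r] m by (auto simp: r_def)
    moreover have "\<forall>x. isCont f x" using f DERIV_isCont by blast
    ultimately show ?thesis using IVT[of f "-r" y r] by blast
  qed
  then show ?thesis by (metis surjI)
qed

lemma continuous_imp_has_real_antiderivative:
  fixes g :: "real \<Rightarrow> real"
  assumes "continuous_on UNIV g"
  obtains G where "G 0 = 0" "\<And>x. (G has_real_derivative g x) (at x)"
proof -
  obtain F where "\<forall>x::real. -\<infinity> < x \<longrightarrow> x < \<infinity> \<longrightarrow> (F has_vector_derivative g x) (at x)"
    using einterval_antiderivative[of "-\<infinity>" "\<infinity>" g] assms
    by (auto simp: continuous_on_eq_continuous_at)
  then have F: "(F has_real_derivative g x) (at x)" for x
    by (simp add: has_real_derivative_iff_has_vector_derivative)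
  show ?thesis
    by (rule that[of "\<lambda>x. F x - F 0"]) (auto intro!: derivative_eq_intros F)
qed

lemma autonomous_ode_time_along_solution:
  fixes F T \<psi> :: "real \<Rightarrow> real"
  assumes T: "\<And>x. (T has_real_derivative inverse (F x)) (at x)" and F: "\<And>x. F x \<noteq> 0"
    and \<psi>: "\<And>u. (\<psi> has_real_derivative F (\<psi> u)) (at u)"
  shows "T (\<psi> u) = u + T (\<psi> 0)"
proof -
  have "((\<lambda>u. T (\<psi> u) - u) has_real_derivative 0) (at v)" for v
    using DERIV_diff[OF DERIV_chain2[OF T \<psi>] DERIV_ident, of v] F[of "\<psi> v"] by simp
  then have "T (\<psi> u) - u = T (\<psi> 0) - 0" by (intro DERIV_isconst_all allI)
  then show ?thesis by simp
qed

text \<open>The solution is the inverse of the time map \<open>T x = \<integral>\<^sub>0\<^sup>x 1/F\<close>; the upper bound on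
  \<open>F\<close> makes \<open>T\<close> onto, so the solution exists for all times.\<close>
lemma autonomous_ode_ex1:
  fixes F :: "real \<Rightarrow> real"
  assumes cont: "continuous_on UNIV F" and pos: "\<And>x. 0 < F x" and bdd: "\<And>x. F x \<le> M"
  shows "\<exists>!\<psi>. \<psi> 0 = 0 \<and> (\<forall>u. (\<psi> has_real_derivative F (\<psi> u)) (at u))"
proof -
  have F_nz: "F x \<noteq> 0" for x using pos[of x] by simp
  obtain T where T0: "T 0 = 0" and T: "\<And>x. (T has_real_derivative inverse (F x)) (at x)"
    using continuous_imp_has_real_antiderivative[of "\<lambda>x. inverse (F x)"] cont F_nz
    by (metis continuous_on_inverse)
  have "inverse M \<le> inverse (F x)" for x using pos bdd by (simp add: le_imp_inverse_le)
  moreover have "0 < inverse M" using pos[of 0] bdd[of 0] by simp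
  ultimately have "surj T" using DERIV_ge_pos_imp_surj[OF T] by blast
  have "inj T" using DERIV_pos_imp_strict_mono[OF T] pos strict_mono_imp_inj_on by simp
  define \<phi> where "\<phi> = inv T"
  have T_\<phi>: "T (\<phi> y) = y" for y unfolding \<phi>_def using \<open>surj T\<close> by (simp add: surj_f_inv_f)
  have \<phi>_T: "\<phi> (T x) = x" for x unfolding \<phi>_def using \<open>inj T\<close> by simp
  have "(\<phi> has_real_derivative F (\<phi> y)) (at y)" for y
  proof -
    have "isCont \<phi> (T (\<phi> y))"
      by (rule isCont_inverse_function[of 1]) (auto simp: \<phi>_T intro: DERIV_isCont[OF T])
    then have cont_\<phi>: "isCont \<phi> y" by (simp only: T_\<phi>)
    have "(\<phi> has_real_derivative inverse (inverse (F (\<phi> y)))) (at y)"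
      by (rule DERIV_inverse_function[where f=T and a="y - 1" and b="y + 1"])
         (simp_all add: T F_nz T_\<phi> cont_\<phi>)
    then show ?thesis using F_nz by simp
  qed
  moreover have "\<psi> = \<phi>" if "\<psi> 0 = 0" "\<forall>u. (\<psi> has_real_derivative F (\<psi> u)) (at u)" for \<psi>
  proof
    fix u
    have "T (\<psi> u) = u" using autonomous_ode_time_along_solution[OF T F_nz] that T0 by simp
    then show "\<psi> u = \<phi> u" using \<phi>_T by metis
  qed
  moreover have "\<phi> 0 = 0" using \<phi>_T[of 0] T0 by simp
  ultimately show ?thesis by (intro ex1I[of _ \<phi>]) blast+
qed

lemma Dfun_sq_le: "(Dfun c \<theta>)\<^sup>2 \<le> 1 / c\<^sup>2"
proof -
  have "(sin \<theta>)\<^sup>2 \<le> 1" by (simp add: abs_square_le_1)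
  then show ?thesis unfolding Dfun_def power_divide by (simp add: divide_right_mono)
qed

context
  fixes l1 l2 :: real
  assumes l2_pos: "0 < l2" and l2_le_l1: "l2 \<le> l1"
begin

lemma Bfun_bounds: "l2\<^sup>2 \<le> Bfun l1 l2 x" "Bfun l1 l2 x \<le> l1\<^sup>2"
proof -
  have gap: "0 \<le> l1\<^sup>2 - l2\<^sup>2" using l2_pos l2_le_l1 by (simp add: power_mono)
  have "Bfun l1 l2 x = l2\<^sup>2 + (l1\<^sup>2 - l2\<^sup>2) * (cos x)\<^sup>2"
    unfolding Bfun_def sin_squared_eq by algebra
  then show "l2\<^sup>2 \<le> Bfun l1 l2 x" using gap by simp
  have "Bfun l1 l2 x = l1\<^sup>2 - (l1\<^sup>2 - l2\<^sup>2) * (sin x)\<^sup>2"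
    unfolding Bfun_def cos_squared_eq by algebra
  then show "Bfun l1 l2 x \<le> l1\<^sup>2" using gap by simp
qed

lemma Bfun_pos: "0 < Bfun l1 l2 x"
  using Bfun_bounds(1)[of x] l2_pos by (meson less_le_trans zero_less_power)

context
  fixes c \<theta> \<kappa> :: real
  assumes \<kappa>_pos: "0 < \<kappa>" and \<kappa>_le_cos: "\<kappa> \<le> cos \<theta>"
    and c_pos: "0 < c" and c_large: "3 * l1\<^sup>2 < c\<^sup>2 * \<kappa>"
begin

lemma Dfun_sq_Bfun_less: "(Dfun c \<theta>)\<^sup>2 * Bfun l1 l2 x < \<kappa> / 3"
proof -
  have "(Dfun c \<theta>)\<^sup>2 * Bfun l1 l2 x \<le> 1 / c\<^sup>2 * l1\<^sup>2"
    using Dfun_sq_le Bfun_bounds(2) Bfun_pos by (intro mult_mono) (auto simp: less_imp_le)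
  also have "\<dots> < \<kappa> / 3" using c_pos c_large by (simp add: field_simps)
  finally show ?thesis .
qed

lemma rhs_bounds: "c \<le> rhs l1 l2 c \<theta> x" "rhs l1 l2 c \<theta> x \<le> 2 * c"
  and rhs_sq: "(rhs l1 l2 c \<theta> x)\<^sup>2 = c\<^sup>2 + 2 * cos \<theta> * Bfun l1 l2 x - (Dfun c \<theta>)\<^sup>2 * (Bfun l1 l2 x)\<^sup>2"
proof -
  define B D where "B = Bfun l1 l2 x" and "D = Dfun c \<theta>"
  have "D\<^sup>2 * B\<^sup>2 = (D\<^sup>2 * B) * B" by (simp add: power2_eq_square)
  also have "\<dots> \<le> cos \<theta> * B"
    using Dfun_sq_Bfun_less[of x] \<kappa>_pos \<kappa>_le_cos Bfun_pos[of x] unfolding B_def D_def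
    by (intro mult_right_mono) auto
  finally have quad: "D\<^sup>2 * B\<^sup>2 \<le> cos \<theta> * B" .
  have "cos \<theta> * B \<le> 1 * l1\<^sup>2"
    using Bfun_bounds(2)[of x] Bfun_pos[of x] \<kappa>_pos \<kappa>_le_cos unfolding B_def
    by (intro mult_mono) auto
  moreover have "c\<^sup>2 * \<kappa> \<le> c\<^sup>2 * 1" using order_trans[OF \<kappa>_le_cos cos_le_one] by (intro mult_left_mono) auto
  ultimately have lin: "cos \<theta> * B \<le> l1\<^sup>2" "3 * l1\<^sup>2 < c\<^sup>2" using c_large by auto
  have "0 \<le> cos \<theta> * B" using \<kappa>_pos \<kappa>_le_cos Bfun_pos[of x] unfolding B_def by simp
  moreover have "0 \<le> D\<^sup>2 * B\<^sup>2" "(2 * c)\<^sup>2 = 4 * c\<^sup>2" by (simp_all add: power_mult_distrib)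
  ultimately have rad: "c\<^sup>2 \<le> c\<^sup>2 + 2 * cos \<theta> * B - D\<^sup>2 * B\<^sup>2"
    and upper: "c\<^sup>2 + 2 * cos \<theta> * B - D\<^sup>2 * B\<^sup>2 \<le> (2 * c)\<^sup>2"
    using quad lin unfolding mult.assoc by linarith+
  have "sqrt (c\<^sup>2) \<le> rhs l1 l2 c \<theta> x" "rhs l1 l2 c \<theta> x \<le> sqrt ((2 * c)\<^sup>2)"
    using real_sqrt_le_mono[OF rad] real_sqrt_le_mono[OF upper]
    unfolding rhs_def B_def D_def by (simp_all only:)
  then show "c \<le> rhs l1 l2 c \<theta> x" "rhs l1 l2 c \<theta> x \<le> 2 * c"
    using c_pos real_sqrt_abs[of "2 * c"] by auto
  show "(rhs l1 l2 c \<theta> x)\<^sup>2 = c\<^sup>2 + 2 * cos \<theta> * Bfun l1 l2 x - (Dfun c \<theta>)\<^sup>2 * (Bfun l1 l2 x)\<^sup>2"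
    using order_trans[OF zero_le_power2 rad] unfolding rhs_def B_def D_def by simp
qed

lemma rhs_defect: "(c - rhs l1 l2 c \<theta> x) / Bfun l1 l2 x \<le> - \<kappa> / (2 * c)"
proof -
  define B D F where "B = Bfun l1 l2 x" and "D = Dfun c \<theta>" and "F = rhs l1 l2 c \<theta> x"
  have F: "c \<le> F" "F \<le> 2 * c" using rhs_bounds unfolding F_def by auto
  have "F\<^sup>2 = c\<^sup>2 + 2 * cos \<theta> * B - D\<^sup>2 * B\<^sup>2" unfolding F_def B_def D_def by (rule rhs_sq)
  then have "(c - F) * (c + F) = B * (D\<^sup>2 * B - 2 * cos \<theta>)"
    by (simp add: algebra_simps power2_eq_square)
  then have "(c - F) / B = (D\<^sup>2 * B - 2 * cos \<theta>) / (c + F)"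
    using Bfun_pos[of x] F c_pos unfolding B_def by (simp add: field_simps)
  also have "\<dots> \<le> (- 3 * \<kappa> / 2) / (c + F)"
    using Dfun_sq_Bfun_less[of x] \<kappa>_pos \<kappa>_le_cos F c_pos unfolding B_def D_def
    by (intro divide_right_mono) auto
  also have "\<dots> \<le> (- 3 * \<kappa> / 2) / (3 * c)"
    using F c_pos \<kappa>_pos by (intro divide_left_mono_neg) auto
  finally show ?thesis unfolding F_def B_def by simp
qed

lemma phi_solves_ode:
  "phi l1 l2 c \<theta> 0 = 0"
  "\<And>u. (phi l1 l2 c \<theta> has_real_derivative rhs l1 l2 c \<theta> (phi l1 l2 c \<theta> u)) (at u)"
proof -
  have "continuous_on UNIV (rhs l1 l2 c \<theta>)"
    unfolding rhs_def Bfun_def by (intro continuous_intros)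
  moreover have "0 < rhs l1 l2 c \<theta> x" for x using rhs_bounds(1)[of x] c_pos by linarith
  ultimately have "\<exists>!\<psi>. \<psi> 0 = 0 \<and> (\<forall>u. (\<psi> has_real_derivative rhs l1 l2 c \<theta> (\<psi> u)) (at u))"
    using rhs_bounds(2) by (rule autonomous_ode_ex1)
  from theI'[OF this] show "phi l1 l2 c \<theta> 0 = 0"
    "\<And>u. (phi l1 l2 c \<theta> has_real_derivative rhs l1 l2 c \<theta> (phi l1 l2 c \<theta> u)) (at u)"
    unfolding phi_def by blast+
qed

lemma Ufun_pos: "0 < Ufun l1 l2 c \<theta>"
proof -
  let ?p = "phi l1 l2 c \<theta>"
  have "strict_mono ?p"
    by (rule DERIV_pos_imp_strict_mono[OF phi_solves_ode(2)])
       (use rhs_bounds(1) c_pos in \<open>meson less_le_trans\<close>)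
  moreover have "surj ?p"
    using phi_solves_ode(2) c_pos rhs_bounds(1) by (rule DERIV_ge_pos_imp_surj)
  then obtain U where U: "?p U = pi" by (metis surjD)
  ultimately have "\<exists>!U. 0 < U \<and> ?p U = pi"
    using phi_solves_ode(1) strict_mono_less strict_mono_eq by (intro ex1I[of _ U]) fastforce+
  from theI'[OF this] show ?thesis unfolding Ufun_def ..
qed

lemma phi_continuous: "continuous_on UNIV (phi l1 l2 c \<theta>)"
  using phi_solves_ode(2) DERIV_isCont continuous_at_imp_continuous_on by blast

lemma Dfun_ffun_le:
  assumes "0 \<le> u"
  shows "Dfun c \<theta> * ffun l1 l2 c \<theta> u \<le> u * \<kappa> / 3"
proof -
  let ?D = "Dfun c \<theta>" and ?B = "\<lambda>s. Bfun l1 l2 (phi l1 l2 c \<theta> s)"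
  have "continuous_on {0..u} ?B"
    unfolding Bfun_def by (auto intro!: continuous_intros intro: continuous_on_subset phi_continuous)
  then have int: "(\<lambda>s. ?D\<^sup>2 * ?B s) integrable_on {0..u}"
    by (intro integrable_continuous_real continuous_on_mult continuous_on_const)
  have "?D * ffun l1 l2 c \<theta> u = integral {0..u} (\<lambda>s. ?D\<^sup>2 * ?B s)"
    unfolding ffun_def by (simp add: power2_eq_square mult.assoc)
  also have "\<dots> \<le> integral {0..u} (\<lambda>s. \<kappa> / 3)"
    by (intro integral_le int) (use Dfun_sq_Bfun_less in \<open>auto simp: less_imp_le\<close>)
  finally show ?thesis using assms by simp
qed

lemma Gfun_le:
  assumes "0 \<le> u"
  shows "Gfun l1 l2 c \<theta> u \<le> - u * \<kappa> / (2 * c)"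
proof -
  let ?F = "\<lambda>s. rhs l1 l2 c \<theta> (phi l1 l2 c \<theta> s)" and ?B = "\<lambda>s. Bfun l1 l2 (phi l1 l2 c \<theta> s)"
  have "continuous_on {0..u} ?B" "continuous_on {0..u} ?F"
    unfolding rhs_def Bfun_def
    by (auto intro!: continuous_intros intro: continuous_on_subset phi_continuous)
  then have int: "(\<lambda>s. (c - ?F s) / ?B s) integrable_on {0..u}"
    using Bfun_pos
    by (intro integrable_continuous_real continuous_on_divide continuous_on_diff continuous_on_const)
       (auto simp: less_imp_neq[symmetric])
  have "Gfun l1 l2 c \<theta> u = integral {0..u} (\<lambda>s. (c - ?F s) / ?B s)"
    unfolding Gfun_def ..
  also have "\<dots> \<le> integral {0..u} (\<lambda>s. - \<kappa> / (2 * c))"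
    using rhs_defect by (intro integral_le int) auto
  finally show ?thesis using assms by simp
qed

lemma Hfun_neg: "Hfun l1 l2 c \<theta> < 0"
proof -
  define U where "U = Ufun l1 l2 c \<theta>"
  have U: "0 < U" unfolding U_def by (rule Ufun_pos)
  have "c * Gfun l1 l2 c \<theta> U \<le> c * (- U * \<kappa> / (2 * c))"
    using Gfun_le[of U] U c_pos by (intro mult_left_mono) auto
  then have "Hfun l1 l2 c \<theta> \<le> U * \<kappa> / 3 - U * \<kappa> / 2"
    using Dfun_ffun_le[of U] U c_pos unfolding Hfun_def U_def[symmetric] by simp
  also have "\<dots> < 0" using U \<kappa>_pos by simp
  finally show ?thesis .
qed

end

end

theorem lemma5p3:
  fixes l1 l2 :: real
  assumes lam: "(l1 > l2 \<and> l2 > 0) \<or> (l1 = 1 \<and> l2 = 1)"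
  assumes uniq: "\<forall>c>0. \<exists>!\<theta>. 0 < \<theta> \<and> \<theta> < pi/2 \<and> \<theta> < theta_plus l1 c \<and> Hfun l1 l2 c \<theta> = 0"
  shows "((\<lambda>c. THE \<theta>. 0 < \<theta> \<and> \<theta> < pi/2 \<and> \<theta> < theta_plus l1 c \<and> Hfun l1 l2 c \<theta> = 0)
           \<longlongrightarrow> pi/2) at_top"
proof -
  define \<theta> where "\<theta> = (\<lambda>c. THE \<theta>. 0 < \<theta> \<and> \<theta> < pi/2 \<and> \<theta> < theta_plus l1 c \<and> Hfun l1 l2 c \<theta> = 0)"
  have l: "0 < l2" "l2 \<le> l1" using lam by auto
  have \<theta>: "0 < \<theta> c \<and> \<theta> c < pi/2 \<and> Hfun l1 l2 c (\<theta> c) = 0" if "0 < c" for c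
    using theI'[OF uniq[rule_format, OF that]] unfolding \<theta>_def by blast
  have "((\<lambda>c. cos (\<theta> c)) \<longlongrightarrow> 0) at_top"
  proof (rule tendstoI)
    fix \<kappa> :: real
    assume "0 < \<kappa>"
    have "\<forall>\<^sub>F c in at_top. 0 < c \<and> 3 * l1\<^sup>2 < c\<^sup>2 * \<kappa>"
      using \<open>0 < \<kappa>\<close> by (intro eventually_conj) real_asymp+
    then show "\<forall>\<^sub>F c in at_top. dist (cos (\<theta> c)) 0 < \<kappa>"
    proof eventually_elim
      case (elim c)
      then have c: "0 < c" "3 * l1\<^sup>2 < c\<^sup>2 * \<kappa>" by auto
      then have "\<not> \<kappa> \<le> cos (\<theta> c)" using Hfun_neg[OF l \<open>0 < \<kappa>\<close>] \<theta> by force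
      moreover have "0 < cos (\<theta> c)"
        using \<theta>[OF c(1)] pi_gt_zero by (intro cos_gt_zero_pi) linarith+
      ultimately show ?case by simp
    qed
  qed
  then have "((\<lambda>c. arccos (cos (\<theta> c))) \<longlongrightarrow> arccos 0) at_top"
    using isCont_tendsto_compose[OF isCont_arccos[of 0]] by simp
  moreover have "\<forall>\<^sub>F c in at_top. arccos (cos (\<theta> c)) = \<theta> c"
    using eventually_gt_at_top[of 0]
    by eventually_elim (use \<theta> pi_gt_zero in \<open>force intro: arccos_cos\<close>)
  ultimately show ?thesis unfolding \<theta>_def[symmetric] by (simp add: tendsto_cong)
qed

end
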